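(* Let $k\ge 1$, let $b_0<\dots<b_k$ and $r_0>\dots>r_k=0$ be reals, let $s_i=\frac{b_i-b_{i-1}}{r_{i-1}-r_i}$ for $1\le i\le k$, and assume $s_1<\dots<s_k$. Let $p^i_1(t)=\min\{1,(e^{t/s_i}-1)/(e-1)\}$ for $1\le i\le k$, and let $\hat p_0=1-p^1_1$, $\hat p_i=p^i_1-p^{i+1}_1$ ($1\le i\le k-1$), $\hat p_k=p^k_1$. Then there is an online randomized strategy, i.e. a random nondecreasing sequence of transition times $0\le t_1\le t_2\le\dots\le t_k\le\infty$ (where $t_i$ is the time of the transition from state $i-1$ to state $i$, starting in state $0$), whose profile is $\hat p$: for every $t\ge 0$ and every $i\in\{0,\dots,k\}$, the probability that the strategy is in state $i$ at time $t$ equals $\hat p_i(t)$.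
   Context: In the additive multislope ski rental problem there are states $0,\dots,k$; state $i$ has buying cost $b_i$ and rental rate $r_i$, transitions are only of the form $i-1\to i$, and a deterministic strategy is a nondecreasing sequence of transition times. A randomized strategy is a probability distribution over deterministic strategies; its profile is the vector $(p_0(t),\dots,p_k(t))$ where $p_i(t)$ is the probability of being in state $i$ at time $t$. *)

theory Defs
  imports "HOL-Probability.Probability"
begin

definition slope :: "(nat \<Rightarrow> real) \<Rightarrow> (nat \<Rightarrow> real) \<Rightarrow> nat \<Rightarrow> real" where
  "slope b r i = (b i - b (i - 1)) / (r (i - 1) - r i)"

definition p1 :: "(nat \<Rightarrow> real) \<Rightarrow> nat \<Rightarrow> real \<Rightarrow> real" where
  "p1 s i t = min 1 ((exp (t / s i) - 1) / (exp 1 - 1))"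

definition phat :: "nat \<Rightarrow> (nat \<Rightarrow> real) \<Rightarrow> nat \<Rightarrow> real \<Rightarrow> real" where
  "phat k s i t = (if i = 0 then 1 - p1 s 1 t
                   else if i < k then p1 s i t - p1 s (Suc i) t
                   else p1 s k t)"

text \<open>A deterministic strategy is given by transition times tau 1 \<le> ... \<le> tau k in [0,\<infinity>],
  tau i being the time of the transition i-1 \<rightarrow> i.\<close>
definition in_state :: "nat \<Rightarrow> (nat \<Rightarrow> ennreal) \<Rightarrow> real \<Rightarrow> nat \<Rightarrow> bool" where
  "in_state k \<tau> t i \<longleftrightarrow> (i = 0 \<or> \<tau> i \<le> ennreal t) \<and> (i = k \<or> ennreal t < \<tau> (Suc i))"

end

theory Submission
  imports Defs
begin

text \<open>All transition times are driven by one uniform random number \<open>u \<in> [0,1]\<close>: the transition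
  into state \<open>i\<close> happens at time \<open>s\<^sub>i ln (1 + (e - 1) u)\<close>, the \<open>u\<close>-quantile of the distribution
  function \<open>p\<^sup>i\<^sub>1\<close>. Since \<open>s\<^sub>1 < \<dots> < s\<^sub>k\<close> these times are nondecreasing in \<open>i\<close>, and the strategy has
  reached state \<open>i\<close> by time \<open>t\<close> exactly when \<open>u \<le> p\<^sup>i\<^sub>1(t)\<close>. Being in state \<open>i\<close> is therefore the
  event \<open>p\<^sup>i\<^sup>+\<^sup>1\<^sub>1(t) < u \<le> p\<^sup>i\<^sub>1(t)\<close>, whose probability is \<open>p\<^sup>i\<^sub>1(t) - p\<^sup>i\<^sup>+\<^sup>1\<^sub>1(t)\<close>.\<close>

abbreviation unit_uniform :: "real measure" where
  "unit_uniform \<equiv> uniform_measure lborel {0..1}"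

lemma prob_space_unit_uniform: "prob_space unit_uniform"
  by (rule prob_space_uniform_measure) simp_all

lemma measure_unit_uniform_atMost:
  assumes "0 \<le> x"
  shows "measure unit_uniform {..x} = min 1 x"
proof -
  have "{0..1} \<inter> {..x} = {0..min 1 x}" by auto
  then show ?thesis using assms by simp
qed

lemma measure_unit_uniform_band:
  fixes a :: "nat \<Rightarrow> real"
  assumes "0 < k" "i \<le> k"
    and nonneg: "\<And>j. 1 \<le> j \<Longrightarrow> j \<le> k \<Longrightarrow> 0 \<le> a j"
    and antimono: "\<And>j. 1 \<le> j \<Longrightarrow> j < k \<Longrightarrow> a (Suc j) \<le> a j"
  shows "measure unit_uniform {u. (i = 0 \<or> u \<le> a i) \<and> (i = k \<or> a (Suc i) < u)}
       = (if i = 0 then 1 else min 1 (a i)) - (if i = k then 0 else min 1 (a (Suc i)))"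
proof -
  interpret U: prob_space unit_uniform by (rule prob_space_unit_uniform)
  consider "i = 0" | "i = k" | "0 < i" "i < k" using assms(2) by linarith
  then show ?thesis
  proof cases
    case 1
    then have "{u. (i = 0 \<or> u \<le> a i) \<and> (i = k \<or> a (Suc i) < u)} = space unit_uniform - {..a 1}"
      using assms(1) by auto
    moreover have "measure unit_uniform (space unit_uniform - {..a 1}) = 1 - min 1 (a 1)"
      using nonneg[of 1] assms(1) by (subst U.prob_compl) (simp_all add: measure_unit_uniform_atMost)
    ultimately show ?thesis using 1 assms(1) by simp
  next
    case 2
    then have "{u. (i = 0 \<or> u \<le> a i) \<and> (i = k \<or> a (Suc i) < u)} = {..a k}"
      using assms(1) by auto
    then show ?thesis using 2 assms(1) nonneg[of k] by (simp add: measure_unit_uniform_atMost)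
  next
    case 3
    then have "{u. (i = 0 \<or> u \<le> a i) \<and> (i = k \<or> a (Suc i) < u)} = {..a i} - {..a (Suc i)}"
      by auto
    moreover have "{..a (Suc i)} \<subseteq> {..a i}" using antimono[of i] 3 by auto
    then have "measure unit_uniform ({..a i} - {..a (Suc i)}) = min 1 (a i) - min 1 (a (Suc i))"
      using 3 nonneg[of i] nonneg[of "Suc i"]
      by (subst U.finite_measure_Diff) (simp_all add: measure_unit_uniform_atMost)
    ultimately show ?thesis using 3 by simp
  qed
qed

definition exp_transition_time :: "real \<Rightarrow> real \<Rightarrow> real" where
  "exp_transition_time s u = s * ln (1 + (exp 1 - 1) * u)"

lemma exp_transition_time_mono:
  "s \<le> s' \<Longrightarrow> 0 \<le> u \<Longrightarrow> exp_transition_time s u \<le> exp_transition_time s' u"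
  by (simp add: exp_transition_time_def mult_right_mono)

lemma exp_transition_time_le_iff:
  assumes "0 < s" "0 \<le> u"
  shows "exp_transition_time s u \<le> t \<longleftrightarrow> u \<le> (exp (t / s) - 1) / (exp 1 - 1)"
proof -
  have e: "0 < exp 1 - (1::real)" by simp
  have "exp_transition_time s u \<le> t \<longleftrightarrow> ln (1 + (exp 1 - 1) * u) \<le> t / s"
    using assms by (simp add: exp_transition_time_def pos_le_divide_eq mult.commute)
  also have "\<dots> \<longleftrightarrow> 1 + (exp 1 - 1) * u \<le> exp (t / s)"
    using e assms(2) by (metis add_pos_nonneg exp_le_cancel_iff exp_ln mult_nonneg_nonneg
        less_imp_le zero_less_one)
  also have "\<dots> \<longleftrightarrow> u \<le> (exp (t / s) - 1) / (exp 1 - 1)"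
    using e by (simp add: pos_le_divide_eq algebra_simps)
  finally show ?thesis .
qed

lemma in_state_iff_thresholds:
  fixes a :: "nat \<Rightarrow> real"
  assumes "i \<le> k" and thresholds: "\<And>j. 1 \<le> j \<Longrightarrow> j \<le> k \<Longrightarrow> \<tau> j \<le> ennreal t \<longleftrightarrow> u \<le> a j"
  shows "in_state k \<tau> t i \<longleftrightarrow> (i = 0 \<or> u \<le> a i) \<and> (i = k \<or> a (Suc i) < u)"
proof -
  have "i = 0 \<or> \<tau> i \<le> ennreal t \<longleftrightarrow> i = 0 \<or> u \<le> a i"
    using assms(1) thresholds[of i] by (cases "i = 0") auto
  moreover have "i = k \<or> ennreal t < \<tau> (Suc i) \<longleftrightarrow> i = k \<or> a (Suc i) < u"
    using assms(1) thresholds[of "Suc i"] by (cases "i = k") (auto simp flip: not_le)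
  ultimately show ?thesis unfolding in_state_def by blast
qed

lemma pred_in_state:
  assumes "i \<le> k"
  shows "Measurable.pred (PiM {1..k} (\<lambda>_. borel)) (\<lambda>\<tau>. in_state k \<tau> t i)"
proof -
  have "Measurable.pred (PiM {1..k} (\<lambda>_. borel)) (\<lambda>\<tau>. i = 0 \<or> \<tau> i \<le> ennreal t)"
    using assms by (cases "i = 0") (simp_all, measurable)
  moreover have "Measurable.pred (PiM {1..k} (\<lambda>_. borel)) (\<lambda>\<tau>. i = k \<or> ennreal t < \<tau> (Suc i))"
    using assms by (cases "i = k") (simp_all, measurable)
  ultimately show ?thesis unfolding in_state_def by measurable
qed

lemma pred_mono_on_PiM:
  fixes I :: "'i::order set"
  assumes "finite I"
  shows "Measurable.pred (PiM I (\<lambda>_. borel :: 'a::{linorder_topology, second_countable_topology} measure))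
           (mono_on I)"
proof -
  have "Measurable.pred (PiM I (\<lambda>_. borel :: 'a measure)) (\<lambda>x. x i \<le> x j)" if "i \<in> I" "j \<in> I" for i j
    using that unfolding pred_def by (intro borel_measurable_le measurable_component_singleton)
  then have "Measurable.pred (PiM I (\<lambda>_. borel :: 'a measure)) (\<lambda>x. \<forall>i\<in>I. \<forall>j\<in>I. i \<le> j \<longrightarrow> x i \<le> x j)"
    using assms by (intro pred_intros_finite pred_intros_imp')
  moreover have "mono_on I = (\<lambda>x::'i \<Rightarrow> 'a. \<forall>i\<in>I. \<forall>j\<in>I. i \<le> j \<longrightarrow> x i \<le> x j)"
    by (auto simp: monotone_on_def)
  ultimately show ?thesis by simp
qed

lemma phat_eq_diff:
  assumes "0 < k" "i \<le> k"
  shows "phat k s i t = (if i = 0 then 1 else p1 s i t) - (if i = k then 0 else p1 s (Suc i) t)"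
  using assms by (simp add: phat_def)

lemma mono_on_atLeastAtMost_SucI:
  fixes f :: "nat \<Rightarrow> 'a::order"
  assumes "\<And>n. m \<le> n \<Longrightarrow> n < k \<Longrightarrow> f n \<le> f (Suc n)"
  shows "mono_on {m..k} f"
proof (rule mono_onI)
  fix i j assume "i \<in> {m..k}" "j \<in> {m..k}" "i \<le> j"
  moreover have "{i..<j} \<subseteq> {m..<k}" using calculation by auto
  ultimately show "f i \<le> f j" using lift_Suc_mono_le_ivl[of "{m..<k}" f] assms by auto
qed

lemma slope_pos:
  assumes "b (i - 1) < b i" "r i < r (i - 1)"
  shows "0 < slope b r i"
  using assms by (simp add: slope_def)

definition exp_strategy :: "nat \<Rightarrow> (nat \<Rightarrow> real) \<Rightarrow> real \<Rightarrow> nat \<Rightarrow> ennreal" where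
  "exp_strategy k s u = (\<lambda>i\<in>{1..k}. ennreal (exp_transition_time (s i) u))"

lemma exp_strategy_measurable:
  "exp_strategy k s \<in> unit_uniform \<rightarrow>\<^sub>M PiM {1..k} (\<lambda>_. borel)"
  unfolding exp_strategy_def exp_transition_time_def by measurable

lemma AE_exp_strategy_mono:
  assumes "mono_on {1..k} s"
  shows "AE u in unit_uniform. mono_on {1..k} (exp_strategy k s u)"
  using assms
  by (intro AE_uniform_measureI)
    (auto simp: exp_strategy_def monotone_on_def intro!: ennreal_leI exp_transition_time_mono)

lemma measure_exp_strategy_in_state:
  assumes "0 < k" "i \<le> k" "0 \<le> t"
    and pos: "\<And>j. 1 \<le> j \<Longrightarrow> j \<le> k \<Longrightarrow> 0 < s j" and mono: "mono_on {1..k} s"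
  shows "measure unit_uniform {u. in_state k (exp_strategy k s u) t i} = phat k s i t"
proof -
  define a where "a j = (exp (t / s j) - 1) / (exp 1 - 1)" for j
  have a_nonneg: "0 \<le> a j" if "1 \<le> j" "j \<le> k" for j
    using pos[OF that] assms(3) by (simp add: a_def)
  have a_antimono: "a (Suc j) \<le> a j" if "1 \<le> j" "j < k" for j
  proof -
    have "s j \<le> s (Suc j)" using mono that by (simp add: monotone_on_def)
    then have "t / s (Suc j) \<le> t / s j" using pos[of j] that assms(3) by (simp add: frac_le)
    then show ?thesis by (simp add: a_def divide_right_mono)
  qed
  have thresholds: "exp_strategy k s u j \<le> ennreal t \<longleftrightarrow> u \<le> a j"
    if "0 \<le> u" "1 \<le> j" "j \<le> k" for u j
    using exp_transition_time_le_iff[OF pos[OF that(2,3)] that(1), of t] that assms(3)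
    by (simp add: exp_strategy_def a_def)
  have "Measurable.pred unit_uniform (\<lambda>u. in_state k (exp_strategy k s u) t i)"
    using measurable_compose[OF exp_strategy_measurable pred_in_state[OF assms(2)]] by simp
  then have "measure unit_uniform {u. in_state k (exp_strategy k s u) t i}
      = measure unit_uniform {u. (i = 0 \<or> u \<le> a i) \<and> (i = k \<or> a (Suc i) < u)}"
    by (intro measure_eq_AE AE_uniform_measureI)
      (auto simp: pred_def in_state_iff_thresholds[OF assms(2) thresholds])
  also have "\<dots> = phat k s i t"
    using measure_unit_uniform_band[of k i a, OF assms(1,2) a_nonneg a_antimono]
      phat_eq_diff[OF assms(1,2)]
    by (simp add: p1_def a_def)
  finally show ?thesis .
qed

theorem lemma3p3:
  fixes k :: nat and b r :: "nat \<Rightarrow> real"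
  assumes "k \<ge> 1"
    and "\<And>i. 1 \<le> i \<Longrightarrow> i \<le> k \<Longrightarrow> b (i - 1) < b i"
    and "\<And>i. 1 \<le> i \<Longrightarrow> i \<le> k \<Longrightarrow> r (i - 1) > r i"
    and "r k = 0"
    and "\<And>i. 1 \<le> i \<Longrightarrow> i < k \<Longrightarrow> slope b r i < slope b r (Suc i)"
  shows "\<exists>M :: (nat \<Rightarrow> ennreal) measure.
           prob_space M \<and>
           sets M = sets (PiM {1..k} (\<lambda>_. (borel :: ennreal measure))) \<and>
           (AE \<tau> in M. \<forall>i j. 1 \<le> i \<longrightarrow> i \<le> j \<longrightarrow> j \<le> k \<longrightarrow> \<tau> i \<le> \<tau> j) \<and>
           (\<forall>t::real. t \<ge> 0 \<longrightarrow> (\<forall>i\<le>k.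
              measure M {\<tau> \<in> space M. in_state k \<tau> t i} = phat k (slope b r) i t))"
proof -
  define s where "s = slope b r"
  have s_pos: "0 < s i" if "1 \<le> i" "i \<le> k" for i
    unfolding s_def using assms(2,3)[OF that] by (rule slope_pos)
  have s_mono: "mono_on {1..k} s"
    using assms(5) by (intro mono_on_atLeastAtMost_SucI) (simp add: s_def less_imp_le)
  define N where "N = PiM {1..k} (\<lambda>_. borel :: ennreal measure)"
  define M where "M = distr unit_uniform N (exp_strategy k s)"
  note meas = exp_strategy_measurable[of k s, folded N_def]
  have "prob_space M"
    unfolding M_def by (rule prob_space.prob_space_distr[OF prob_space_unit_uniform meas])
  moreover have "sets M = sets N" by (simp add: M_def)
  moreover have "AE \<tau> in M. mono_on {1..k} \<tau>"
  proof -
    have "{\<tau> \<in> space N. mono_on {1..k} \<tau>} \<in> sets N"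
      unfolding N_def by (rule predE[OF pred_mono_on_PiM]) simp
    then show ?thesis
      unfolding M_def using AE_distr_iff[OF meas] AE_exp_strategy_mono[OF s_mono] by blast
  qed
  moreover have "measure M {\<tau> \<in> space M. in_state k \<tau> t i} = phat k s i t"
    if "0 \<le> t" "i \<le> k" for t i
    using measure_distr[OF meas pred_in_state[OF that(2), folded N_def, THEN predE]]
      measurable_space[OF meas] measure_exp_strategy_in_state[OF _ that(2,1) s_pos s_mono] assms(1)
    by (simp add: M_def vimage_def)
  ultimately show ?thesis
    unfolding N_def s_def by (intro exI[of _ M]) (auto simp: monotone_on_def elim!: eventually_mono)
qed

end
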